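(* For every finite multiset $\Gamma$ and formulas $\varphi,\psi,\delta,\chi$: if $\Gamma,(\varphi\to\psi)\to\delta\Rightarrow\chi$ is provable in $\mathsf{G4iSLt}$, then $\Gamma,\varphi,\psi\to\delta,\psi\to\delta\Rightarrow\chi$ is provable in $\mathsf{G4iSLt}$.
   Context: Formulas are built by the grammar $\varphi ::= p \mid \bot \mid \varphi\land\varphi \mid \varphi\lor\varphi \mid \varphi\to\varphi \mid \Box\varphi$, with $p$ ranging over a countably infinite set of propositional variables. For a multiset $\Gamma$, $\Box\Gamma=\{\Box\psi:\psi\in\Gamma\}$; a boxed formula is one of the form $\Box\psi$. A sequent is $\Gamma\Rightarrow\chi$ with $\Gamma$ a finite multiset of formulas and $\chi$ a formula. The sequent calculus $\mathsf{G4iSLt}$ has the following rules, where $p$ is a propositional variable and $\Phi$ always denotes a multiset containing no boxed formula: (⊥L) $\bot,\Gamma\Rightarrow\chi$ (no premise); (IdP) $\Gamma,p\Rightarrow p$ (no premise); (∧L) from $\Gamma,\varphi,\psi\Rightarrow\chi$ infer $\Gamma,\varphi\land\psi\Rightarrow\chi$; (∧R) from $\Gamma\Rightarrow\varphi$ and $\Gamma\Rightarrow\psi$ infer $\Gamma\Rightarrow\varphi\land\psi$; (∨L) from $\Gamma,\varphi\Rightarrow\chi$ and $\Gamma,\psi\Rightarrow\chi$ infer $\Gamma,\varphi\lor\psi\Rightarrow\chi$; (∨R$_i$), $i\in\{1,2\}$: from $\Gamma\Rightarrow\varphi_i$ infer $\Gamma\Rightarrow\varphi_1\lor\varphi_2$;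 (p→L) from $\Gamma,p,\varphi\Rightarrow\chi$ infer $\Gamma,p,p\to\varphi\Rightarrow\chi$; (→R) from $\Gamma,\varphi\Rightarrow\psi$ infer $\Gamma\Rightarrow\varphi\to\psi$; (□→L) from $\Phi,\Gamma,\psi,\Box\varphi\Rightarrow\varphi$ and $\Phi,\Box\Gamma,\psi\Rightarrow\chi$ infer $\Phi,\Box\Gamma,\Box\varphi\to\psi\Rightarrow\chi$; (SLtR) from $\Phi,\Gamma,\Box\varphi\Rightarrow\varphi$ infer $\Phi,\Box\Gamma\Rightarrow\Box\varphi$; (∧→L) from $\Gamma,\varphi\to(\psi\to\chi)\Rightarrow\delta$ infer $\Gamma,(\varphi\land\psi)\to\chi\Rightarrow\delta$; (∨→L) from $\Gamma,\varphi\to\chi,\psi\to\chi\Rightarrow\delta$ infer $\Gamma,(\varphi\lor\psi)\to\chi\Rightarrow\delta$; (→→L) from $\Gamma,\psi\to\chi\Rightarrow\varphi\to\psi$ and $\Gamma,\chi\Rightarrow\delta$ infer $\Gamma,(\varphi\to\psi)\to\chi\Rightarrow\delta$. A proof of a sequent $S$ is a finite tree of sequents with root $S$ in which each interior node together with its children forms an instance of a rule (conclusion, premises) and each leaf is the conclusion of a premise-free rule; $S$ is provable if it has a proof. *)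

theory Defs
  imports Main "HOL-Library.Multiset"
begin

datatype form =
    Var nat
  | Bot
  | And form form
  | Or form form
  | Imp form form
  | Box form

definition is_boxed :: "form \<Rightarrow> bool" where
  "is_boxed f \<longleftrightarrow> (\<exists>g. f = Box g)"

definition box_free :: "form multiset \<Rightarrow> bool" where
  "box_free \<Phi> \<longleftrightarrow> (\<forall>f \<in># \<Phi>. \<not> is_boxed f)"

abbreviation boxms :: "form multiset \<Rightarrow> form multiset" where
  "boxms \<Gamma> \<equiv> image_mset Box \<Gamma>"

inductive G4iSLt :: "form multiset \<Rightarrow> form \<Rightarrow> bool" where
  BotL: "G4iSLt (add_mset Bot \<Gamma>) \<chi>"
| IdP: "G4iSLt (add_mset (Var p) \<Gamma>) (Var p)"
| AndL: "G4iSLt (add_mset \<phi> (add_mset \<psi> \<Gamma>)) \<chi> \<Longrightarrow>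
         G4iSLt (add_mset (And \<phi> \<psi>) \<Gamma>) \<chi>"
| AndR: "G4iSLt \<Gamma> \<phi> \<Longrightarrow> G4iSLt \<Gamma> \<psi> \<Longrightarrow> G4iSLt \<Gamma> (And \<phi> \<psi>)"
| OrL: "G4iSLt (add_mset \<phi> \<Gamma>) \<chi> \<Longrightarrow> G4iSLt (add_mset \<psi> \<Gamma>) \<chi> \<Longrightarrow>
        G4iSLt (add_mset (Or \<phi> \<psi>) \<Gamma>) \<chi>"
| OrR1: "G4iSLt \<Gamma> \<phi> \<Longrightarrow> G4iSLt \<Gamma> (Or \<phi> \<psi>)"
| OrR2: "G4iSLt \<Gamma> \<psi> \<Longrightarrow> G4iSLt \<Gamma> (Or \<phi> \<psi>)"
| PImpL: "G4iSLt (add_mset (Var p) (add_mset \<phi> \<Gamma>)) \<chi> \<Longrightarrow>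
          G4iSLt (add_mset (Var p) (add_mset (Imp (Var p) \<phi>) \<Gamma>)) \<chi>"
| ImpR: "G4iSLt (add_mset \<phi> \<Gamma>) \<psi> \<Longrightarrow> G4iSLt \<Gamma> (Imp \<phi> \<psi>)"
| BoxImpL: "box_free \<Phi> \<Longrightarrow>
    G4iSLt (\<Phi> + \<Gamma> + {#\<psi>, Box \<phi>#}) \<phi> \<Longrightarrow>
    G4iSLt (\<Phi> + boxms \<Gamma> + {#\<psi>#}) \<chi> \<Longrightarrow>
    G4iSLt (\<Phi> + boxms \<Gamma> + {#Imp (Box \<phi>) \<psi>#}) \<chi>"
| SLtR: "box_free \<Phi> \<Longrightarrow>
    G4iSLt (\<Phi> + \<Gamma> + {#Box \<phi>#}) \<phi> \<Longrightarrow>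
    G4iSLt (\<Phi> + boxms \<Gamma>) (Box \<phi>)"
| AndImpL: "G4iSLt (add_mset (Imp \<phi> (Imp \<psi> \<chi>)) \<Gamma>) \<delta> \<Longrightarrow>
            G4iSLt (add_mset (Imp (And \<phi> \<psi>) \<chi>) \<Gamma>) \<delta>"
| OrImpL: "G4iSLt (add_mset (Imp \<phi> \<chi>) (add_mset (Imp \<psi> \<chi>) \<Gamma>)) \<delta> \<Longrightarrow>
           G4iSLt (add_mset (Imp (Or \<phi> \<psi>) \<chi>) \<Gamma>) \<delta>"
| ImpImpL: "G4iSLt (add_mset (Imp \<psi> \<chi>) \<Gamma>) (Imp \<phi> \<psi>) \<Longrightarrow>
            G4iSLt (add_mset \<chi> \<Gamma>) \<delta> \<Longrightarrow>
            G4iSLt (add_mset (Imp (Imp \<phi> \<psi>) \<chi>) \<Gamma>) \<delta>"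

end

theory Submission
  imports Defs
begin

text \<open>Replacing \<open>(\<phi> \<rightarrow> \<psi>) \<rightarrow> \<delta>\<close> on the left commutes with every rule in which it is not
  principal, so it suffices to treat a principal \<open>\<rightarrow>\<rightarrow>L\<close> with premises
  \<open>\<psi> \<rightarrow> \<delta>, \<Gamma> \<Rightarrow> \<phi> \<rightarrow> \<psi>\<close> and \<open>\<delta>, \<Gamma> \<Rightarrow> \<chi>\<close>. Inverting \<open>\<rightarrow>R\<close> in the first gives
  \<open>\<phi>, \<psi> \<rightarrow> \<delta>, \<Gamma> \<Rightarrow> \<psi>\<close>; together with the weakened second premise, the admissible
  general left implication rule (from \<open>\<Gamma> \<Rightarrow> a\<close> and \<open>d, \<Gamma> \<Rightarrow> e\<close> infer \<open>a \<rightarrow> d, \<Gamma> \<Rightarrow> e\<close>)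
  yields \<open>\<phi>, \<psi> \<rightarrow> \<delta>, \<psi> \<rightarrow> \<delta>, \<Gamma> \<Rightarrow> \<chi>\<close>. Weakening and this rule need the modal rules
  with an arbitrary side context, which rests on replacing \<open>\<box>a\<close> by \<open>a\<close> on the left.\<close>

lemma add_mset_eq_add_mset_neqE:
  assumes "add_mset x M = add_mset y N" "x \<noteq> y"
  obtains K where "M = add_mset y K" "N = add_mset x K"
  using assms by (auto simp: add_eq_conv_ex)

lemma add_mset_eq_boxed_context_cases:
  assumes "\<Phi> + boxms \<Gamma> + R = add_mset x T"
  obtains (unboxed) \<Phi>' where "\<Phi> = add_mset x \<Phi>'" "T = \<Phi>' + boxms \<Gamma> + R"
    | (boxed) a \<Gamma>' where "x = Box a" "\<Gamma> = add_mset a \<Gamma>'" "T = \<Phi> + boxms \<Gamma>' + R"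
    | (rest) R' where "R = add_mset x R'" "T = \<Phi> + boxms \<Gamma> + R'"
proof -
  have T: "T = \<Phi> + boxms \<Gamma> + R - {#x#}"
    using assms by (metis add_mset_remove_trivial)
  have "x \<in># \<Phi> + boxms \<Gamma> + R"
    using assms by (metis union_single_eq_member add_mset_add_single)
  then consider "x \<in># \<Phi>" | "x \<in># boxms \<Gamma>" | "x \<in># R" by auto
  then show ?thesis
  proof cases
    case 1
    then obtain \<Phi>' where "\<Phi> = add_mset x \<Phi>'" by (metis insert_DiffM)
    then show ?thesis using T unboxed by auto
  next
    case 2
    then obtain a where a: "a \<in># \<Gamma>" "x = Box a" by auto
    then obtain \<Gamma>' where "\<Gamma> = add_mset a \<Gamma>'" by (metis insert_DiffM)
    then show ?thesis using T a boxed by auto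
  next
    case 3
    then obtain R' where "R = add_mset x R'" by (metis insert_DiffM)
    then show ?thesis using T rest by auto
  qed
qed

lemma box_free_add_mset [simp]: "box_free (add_mset x \<Phi>) \<longleftrightarrow> \<not> is_boxed x \<and> box_free \<Phi>"
  by (auto simp: box_free_def)

lemma box_free_boxms_split: "\<exists>N \<Theta>. box_free N \<and> \<Phi> = N + boxms \<Theta>"
proof (induction \<Phi>)
  case empty
  show ?case by (rule exI[of _ "{#}"], rule exI[of _ "{#}"]) (simp add: box_free_def)
next
  case (add x \<Phi>)
  then obtain N \<Theta> where N: "box_free N" "\<Phi> = N + boxms \<Theta>" by blast
  show ?case
  proof (cases "is_boxed x")
    case True
    then obtain b where "x = Box b" by (auto simp: is_boxed_def)
    then have "add_mset x \<Phi> = N + boxms (add_mset b \<Theta>)" using N by simp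
    then show ?thesis using N by blast
  next
    case False
    then have "box_free (add_mset x N)" "add_mset x \<Phi> = add_mset x N + boxms \<Theta>" using N by simp_all
    then show ?thesis by blast
  qed
qed

lemma G4iSLt_ctx_eq: "G4iSLt \<Gamma> \<chi> \<Longrightarrow> \<Gamma> = \<Delta> \<Longrightarrow> G4iSLt \<Delta> \<chi>"
  by simp

lemma unbox_left:
  assumes "G4iSLt S c" "S = add_mset (Box a) T"
  shows "G4iSLt (add_mset a T) c"
  using assms
proof (induction arbitrary: a T rule: G4iSLt.induct)
  case (BotL \<Gamma> \<chi>)
  then obtain K where "T = add_mset Bot K" by (auto elim: add_mset_eq_add_mset_neqE)
  then show ?case by (simp add: add_mset_commute G4iSLt.BotL)
next
  case (IdP p \<Gamma>)
  then obtain K where "T = add_mset (Var p) K" by (auto elim: add_mset_eq_add_mset_neqE)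
  then show ?case by (metis G4iSLt.IdP add_mset_commute)
next
  case (AndL \<phi> \<psi> \<Gamma> \<chi>)
  then obtain K where K: "\<Gamma> = add_mset (Box a) K" "T = add_mset (And \<phi> \<psi>) K"
    by (auto elim: add_mset_eq_add_mset_neqE)
  have "G4iSLt (add_mset \<phi> (add_mset \<psi> (add_mset a K))) \<chi>"
    using AndL.IH[of a "add_mset \<phi> (add_mset \<psi> K)"] K by (simp add: add_mset_commute)
  then show ?case by (rule G4iSLt_ctx_eq[OF G4iSLt.AndL]) (simp add: K add_mset_commute)
next
  case (OrL \<phi> \<Gamma> \<chi> \<psi>)
  then obtain K where K: "\<Gamma> = add_mset (Box a) K" "T = add_mset (Or \<phi> \<psi>) K"
    by (auto elim: add_mset_eq_add_mset_neqE)
  have "G4iSLt (add_mset \<phi> (add_mset a K)) \<chi>" "G4iSLt (add_mset \<psi> (add_mset a K)) \<chi>"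
    using OrL.IH(1)[of a "add_mset \<phi> K"] OrL.IH(2)[of a "add_mset \<psi> K"] K
    by (simp_all add: add_mset_commute)
  then show ?case by (rule G4iSLt_ctx_eq[OF G4iSLt.OrL]) (simp add: K add_mset_commute)
next
  case (PImpL p \<phi> \<Gamma> \<chi>)
  then obtain K where K: "\<Gamma> = add_mset (Box a) K"
      "T = add_mset (Var p) (add_mset (Imp (Var p) \<phi>) K)"
    by (auto simp: add_eq_conv_ex)
  have "G4iSLt (add_mset (Var p) (add_mset \<phi> (add_mset a K))) \<chi>"
    using PImpL.IH[of a "add_mset (Var p) (add_mset \<phi> K)"] K by (simp add: add_mset_commute)
  then show ?case by (rule G4iSLt_ctx_eq[OF G4iSLt.PImpL]) (simp add: K add_mset_commute)
next
  case (ImpR \<phi> \<Gamma> \<psi>)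
  then have "G4iSLt (add_mset \<phi> (add_mset a T)) \<psi>"
    using ImpR.IH[of a "add_mset \<phi> T"] by (simp add: add_mset_commute)
  then show ?case by (rule G4iSLt.ImpR)
next
  case (BoxImpL \<Phi> \<Gamma> \<psi> \<phi> \<chi>)
  from BoxImpL.prems obtain \<Gamma>' where \<Gamma>': "\<Gamma> = add_mset a \<Gamma>'"
      "T = \<Phi> + boxms \<Gamma>' + {#Imp (Box \<phi>) \<psi>#}"
    by (rule add_mset_eq_boxed_context_cases) (use BoxImpL.hyps(1) in \<open>auto simp: is_boxed_def\<close>)
  have right: "G4iSLt (add_mset a (\<Phi> + boxms \<Gamma>' + {#\<psi>#})) \<chi>"
    using BoxImpL.IH(2)[of a "\<Phi> + boxms \<Gamma>' + {#\<psi>#}"] \<Gamma>' by (simp add: add_mset_commute)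
  show ?case
  proof (cases "is_boxed a")
    case False
    have "G4iSLt (add_mset a \<Phi> + boxms \<Gamma>' + {#Imp (Box \<phi>) \<psi>#}) \<chi>"
    proof (rule G4iSLt.BoxImpL)
      show "box_free (add_mset a \<Phi>)" using False BoxImpL.hyps(1) by simp
      show "G4iSLt (add_mset a \<Phi> + \<Gamma>' + {#\<psi>, Box \<phi>#}) \<phi>"
        using BoxImpL.hyps(2) \<Gamma>' by (simp add: add_mset_commute)
    qed (use right in \<open>simp add: add_mset_commute\<close>)
    then show ?thesis using \<Gamma>' by (simp add: add_mset_commute)
  next
    case True
    then obtain b where b: "a = Box b" by (auto simp: is_boxed_def)
    have "G4iSLt (\<Phi> + boxms (add_mset b \<Gamma>') + {#Imp (Box \<phi>) \<psi>#}) \<chi>"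
    proof (rule G4iSLt.BoxImpL)
      show "G4iSLt (\<Phi> + add_mset b \<Gamma>' + {#\<psi>, Box \<phi>#}) \<phi>"
        using BoxImpL.IH(1)[of b "\<Phi> + \<Gamma>' + {#\<psi>, Box \<phi>#}"] \<Gamma>' b
        by (simp add: add_mset_commute)
    qed (use BoxImpL.hyps(1) right b in \<open>simp_all add: add_mset_commute\<close>)
    then show ?thesis using \<Gamma>' b by (simp add: add_mset_commute)
  qed
next
  case (SLtR \<Phi> \<Gamma> \<phi>)
  from SLtR.prems obtain \<Gamma>' where \<Gamma>': "\<Gamma> = add_mset a \<Gamma>'" "T = \<Phi> + boxms \<Gamma>'"
    by (rule add_mset_eq_boxed_context_cases[where R = "{#}", simplified])
      (use SLtR.hyps(1) in \<open>auto simp: is_boxed_def\<close>)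
  show ?case
  proof (cases "is_boxed a")
    case False
    have "G4iSLt (add_mset a \<Phi> + boxms \<Gamma>') (Box \<phi>)"
      by (rule G4iSLt.SLtR) (use False SLtR.hyps \<Gamma>' in \<open>simp_all add: add_mset_commute\<close>)
    then show ?thesis using \<Gamma>' by (simp add: add_mset_commute)
  next
    case True
    then obtain b where b: "a = Box b" by (auto simp: is_boxed_def)
    have "G4iSLt (\<Phi> + boxms (add_mset b \<Gamma>')) (Box \<phi>)"
    proof (rule G4iSLt.SLtR)
      show "G4iSLt (\<Phi> + add_mset b \<Gamma>' + {#Box \<phi>#}) \<phi>"
        using SLtR.IH[of b "\<Phi> + \<Gamma>' + {#Box \<phi>#}"] \<Gamma>' b by (simp add: add_mset_commute)
    qed (rule SLtR.hyps(1))
    then show ?thesis using \<Gamma>' b by (simp add: add_mset_commute)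
  qed
next
  case (AndImpL \<phi> \<psi> \<chi> \<Gamma> \<delta>)
  then obtain K where K: "\<Gamma> = add_mset (Box a) K" "T = add_mset (Imp (And \<phi> \<psi>) \<chi>) K"
    by (auto elim: add_mset_eq_add_mset_neqE)
  have "G4iSLt (add_mset (Imp \<phi> (Imp \<psi> \<chi>)) (add_mset a K)) \<delta>"
    using AndImpL.IH[of a "add_mset (Imp \<phi> (Imp \<psi> \<chi>)) K"] K by (simp add: add_mset_commute)
  then show ?case by (rule G4iSLt_ctx_eq[OF G4iSLt.AndImpL]) (simp add: K add_mset_commute)
next
  case (OrImpL \<phi> \<chi> \<psi> \<Gamma> \<delta>)
  then obtain K where K: "\<Gamma> = add_mset (Box a) K" "T = add_mset (Imp (Or \<phi> \<psi>) \<chi>) K"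
    by (auto elim: add_mset_eq_add_mset_neqE)
  have "G4iSLt (add_mset (Imp \<phi> \<chi>) (add_mset (Imp \<psi> \<chi>) (add_mset a K))) \<delta>"
    using OrImpL.IH[of a "add_mset (Imp \<phi> \<chi>) (add_mset (Imp \<psi> \<chi>) K)"] K
    by (simp add: add_mset_commute)
  then show ?case by (rule G4iSLt_ctx_eq[OF G4iSLt.OrImpL]) (simp add: K add_mset_commute)
next
  case (ImpImpL \<psi> \<chi> \<Gamma> \<phi> \<delta>)
  then obtain K where K: "\<Gamma> = add_mset (Box a) K" "T = add_mset (Imp (Imp \<phi> \<psi>) \<chi>) K"
    by (auto elim: add_mset_eq_add_mset_neqE)
  have "G4iSLt (add_mset (Imp \<psi> \<chi>) (add_mset a K)) (Imp \<phi> \<psi>)"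
    "G4iSLt (add_mset \<chi> (add_mset a K)) \<delta>"
    using ImpImpL.IH(1)[of a "add_mset (Imp \<psi> \<chi>) K"] ImpImpL.IH(2)[of a "add_mset \<chi> K"] K
    by (simp_all add: add_mset_commute)
  then show ?case by (rule G4iSLt_ctx_eq[OF G4iSLt.ImpImpL]) (simp add: K add_mset_commute)
qed (simp_all add: G4iSLt.AndR G4iSLt.OrR1 G4iSLt.OrR2)

lemma unbox_left_mset: "G4iSLt (\<Gamma> + boxms \<Theta>) c \<Longrightarrow> G4iSLt (\<Gamma> + \<Theta>) c"
proof (induction \<Theta> arbitrary: \<Gamma>)
  case (add a \<Theta>)
  have "G4iSLt (add_mset a \<Gamma> + boxms \<Theta>) c"
    using unbox_left[OF add.prems, of a "\<Gamma> + boxms \<Theta>"] by simp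
  then show ?case using add.IH by fastforce
qed simp

text \<open>Boxed formulas of \<open>\<Phi>\<close> are moved into the boxed part of the context, where the left
  premise needs them unboxed.\<close>

lemma BoxImpL_gen:
  assumes "G4iSLt (\<Phi> + \<Gamma> + {#\<psi>, Box \<phi>#}) \<phi>" "G4iSLt (\<Phi> + boxms \<Gamma> + {#\<psi>#}) \<chi>"
  shows "G4iSLt (\<Phi> + boxms \<Gamma> + {#Imp (Box \<phi>) \<psi>#}) \<chi>"
proof -
  obtain N \<Theta> where N: "box_free N" "\<Phi> = N + boxms \<Theta>"
    using box_free_boxms_split by blast
  have "G4iSLt ((N + \<Gamma> + {#\<psi>, Box \<phi>#}) + boxms \<Theta>) \<phi>"
    using assms(1) N by (simp add: ac_simps)
  then have "G4iSLt (N + (\<Gamma> + \<Theta>) + {#\<psi>, Box \<phi>#}) \<phi>"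
    by (rule G4iSLt_ctx_eq[OF unbox_left_mset]) (simp add: ac_simps)
  moreover have "G4iSLt (N + boxms (\<Gamma> + \<Theta>) + {#\<psi>#}) \<chi>"
    using assms(2) N by (simp add: ac_simps)
  ultimately have "G4iSLt (N + boxms (\<Gamma> + \<Theta>) + {#Imp (Box \<phi>) \<psi>#}) \<chi>"
    using N(1) by (rule G4iSLt.BoxImpL[rotated])
  then show ?thesis using N by (simp add: ac_simps)
qed

lemma SLtR_gen:
  assumes "G4iSLt (\<Phi> + \<Gamma> + {#Box \<phi>#}) \<phi>"
  shows "G4iSLt (\<Phi> + boxms \<Gamma>) (Box \<phi>)"
proof -
  obtain N \<Theta> where N: "box_free N" "\<Phi> = N + boxms \<Theta>"
    using box_free_boxms_split by blast
  have "G4iSLt ((N + \<Gamma> + {#Box \<phi>#}) + boxms \<Theta>) \<phi>"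
    using assms N by (simp add: ac_simps)
  then have "G4iSLt (N + (\<Gamma> + \<Theta>) + {#Box \<phi>#}) \<phi>"
    by (rule G4iSLt_ctx_eq[OF unbox_left_mset]) (simp add: ac_simps)
  with N(1) have "G4iSLt (N + boxms (\<Gamma> + \<Theta>)) (Box \<phi>)"
    by (rule G4iSLt.SLtR)
  then show ?thesis using N by (simp add: ac_simps)
qed

lemma weakening: "G4iSLt \<Gamma> c \<Longrightarrow> G4iSLt (add_mset x \<Gamma>) c"
proof (induction arbitrary: x rule: G4iSLt.induct)
  case (BotL \<Gamma> \<chi>)
  then show ?case by (metis G4iSLt.BotL add_mset_commute)
next
  case (IdP p \<Gamma>)
  then show ?case by (metis G4iSLt.IdP add_mset_commute)
next
  case (AndL \<phi> \<psi> \<Gamma> \<chi>)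
  have "G4iSLt (add_mset \<phi> (add_mset \<psi> (add_mset x \<Gamma>))) \<chi>"
    using AndL.IH[of x] by (simp add: add_mset_commute)
  then show ?case by (rule G4iSLt_ctx_eq[OF G4iSLt.AndL]) (simp add: add_mset_commute)
next
  case (OrL \<phi> \<Gamma> \<chi> \<psi>)
  have "G4iSLt (add_mset \<phi> (add_mset x \<Gamma>)) \<chi>" "G4iSLt (add_mset \<psi> (add_mset x \<Gamma>)) \<chi>"
    using OrL.IH[of x] by (simp_all add: add_mset_commute)
  then show ?case by (rule G4iSLt_ctx_eq[OF G4iSLt.OrL]) (simp add: add_mset_commute)
next
  case (PImpL p \<phi> \<Gamma> \<chi>)
  have "G4iSLt (add_mset (Var p) (add_mset \<phi> (add_mset x \<Gamma>))) \<chi>"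
    using PImpL.IH[of x] by (simp add: add_mset_commute)
  then show ?case by (rule G4iSLt_ctx_eq[OF G4iSLt.PImpL]) (simp add: add_mset_commute)
next
  case (ImpR \<phi> \<Gamma> \<psi>)
  have "G4iSLt (add_mset \<phi> (add_mset x \<Gamma>)) \<psi>"
    using ImpR.IH[of x] by (simp add: add_mset_commute)
  then show ?case by (rule G4iSLt.ImpR)
next
  case (BoxImpL \<Phi> \<Gamma> \<psi> \<phi> \<chi>)
  have "G4iSLt (add_mset x \<Phi> + boxms \<Gamma> + {#Imp (Box \<phi>) \<psi>#}) \<chi>"
    by (rule BoxImpL_gen) (use BoxImpL.IH[of x] in \<open>simp_all add: add_mset_commute\<close>)
  then show ?case by (simp add: add_mset_commute)
next
  case (SLtR \<Phi> \<Gamma> \<phi>)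
  have "G4iSLt (add_mset x \<Phi> + boxms \<Gamma>) (Box \<phi>)"
    by (rule SLtR_gen) (use SLtR.IH[of x] in \<open>simp add: add_mset_commute\<close>)
  then show ?case by (simp add: add_mset_commute)
next
  case (AndImpL \<phi> \<psi> \<chi> \<Gamma> \<delta>)
  have "G4iSLt (add_mset (Imp \<phi> (Imp \<psi> \<chi>)) (add_mset x \<Gamma>)) \<delta>"
    using AndImpL.IH[of x] by (simp add: add_mset_commute)
  then show ?case by (rule G4iSLt_ctx_eq[OF G4iSLt.AndImpL]) (simp add: add_mset_commute)
next
  case (OrImpL \<phi> \<chi> \<psi> \<Gamma> \<delta>)
  have "G4iSLt (add_mset (Imp \<phi> \<chi>) (add_mset (Imp \<psi> \<chi>) (add_mset x \<Gamma>))) \<delta>"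
    using OrImpL.IH[of x] by (simp add: add_mset_commute)
  then show ?case by (rule G4iSLt_ctx_eq[OF G4iSLt.OrImpL]) (simp add: add_mset_commute)
next
  case (ImpImpL \<psi> \<chi> \<Gamma> \<phi> \<delta>)
  have "G4iSLt (add_mset (Imp \<psi> \<chi>) (add_mset x \<Gamma>)) (Imp \<phi> \<psi>)"
    "G4iSLt (add_mset \<chi> (add_mset x \<Gamma>)) \<delta>"
    using ImpImpL.IH[of x] by (simp_all add: add_mset_commute)
  then show ?case by (rule G4iSLt_ctx_eq[OF G4iSLt.ImpImpL]) (simp add: add_mset_commute)
qed (simp_all add: G4iSLt.AndR G4iSLt.OrR1 G4iSLt.OrR2)

text \<open>In the implication rules with an
  atomic or boxed antecedent the side formulas stay in \<open>T\<close>.\<close>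

inductive principal_left :: "form \<Rightarrow> form multiset \<Rightarrow> form \<Rightarrow> bool" where
  AndL: "G4iSLt (add_mset \<phi> (add_mset \<psi> T)) c \<Longrightarrow> principal_left (And \<phi> \<psi>) T c"
| OrL: "G4iSLt (add_mset \<phi> T) c \<Longrightarrow> G4iSLt (add_mset \<psi> T) c \<Longrightarrow>
    principal_left (Or \<phi> \<psi>) T c"
| PImpL: "G4iSLt (add_mset (Var p) (add_mset \<phi> T)) c \<Longrightarrow>
    principal_left (Imp (Var p) \<phi>) (add_mset (Var p) T) c"
| BoxImpL: "box_free \<Phi> \<Longrightarrow> G4iSLt (\<Phi> + \<Gamma> + {#\<psi>, Box \<phi>#}) \<phi> \<Longrightarrow>
    G4iSLt (\<Phi> + boxms \<Gamma> + {#\<psi>#}) c \<Longrightarrow> principal_left (Imp (Box \<phi>) \<psi>) (\<Phi> + boxms \<Gamma>) c"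
| AndImpL: "G4iSLt (add_mset (Imp \<phi> (Imp \<psi> \<chi>)) T) c \<Longrightarrow>
    principal_left (Imp (And \<phi> \<psi>) \<chi>) T c"
| OrImpL: "G4iSLt (add_mset (Imp \<phi> \<chi>) (add_mset (Imp \<psi> \<chi>) T)) c \<Longrightarrow>
    principal_left (Imp (Or \<phi> \<psi>) \<chi>) T c"
| ImpImpL: "G4iSLt (add_mset (Imp \<psi> \<chi>) T) (Imp \<phi> \<psi>) \<Longrightarrow> G4iSLt (add_mset \<chi> T) c \<Longrightarrow>
    principal_left (Imp (Imp \<phi> \<psi>) \<chi>) T c"

text \<open>Every rule in which \<open>X\<close> is not principal permutes with the replacement of \<open>X\<close>.\<close>

lemma left_replacement:
  assumes "G4iSLt (add_mset X T) c"
    and "\<not> is_boxed X" "\<And>p. X \<noteq> Var p" "X \<noteq> Bot"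
    and principal: "\<And>T c. principal_left X T c \<Longrightarrow> G4iSLt (T + N) c"
  shows "G4iSLt (T + N) c"
proof -
  have "G4iSLt S c \<Longrightarrow> S = add_mset X T \<Longrightarrow> G4iSLt (T + N) c" for S
  proof (induction arbitrary: T rule: G4iSLt.induct)
    case (BotL \<Gamma> \<chi>)
    then obtain K where "T = add_mset Bot K"
      using \<open>X \<noteq> Bot\<close> by (auto elim: add_mset_eq_add_mset_neqE)
    then show ?case by (simp add: G4iSLt.BotL)
  next
    case (IdP p \<Gamma>)
    then obtain K where "T = add_mset (Var p) K"
      using \<open>X \<noteq> Var p\<close> by (auto elim: add_mset_eq_add_mset_neqE)
    then show ?case by (simp add: G4iSLt.IdP)
  next
    case (AndL \<phi> \<psi> \<Gamma> \<chi>)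
    show ?case
    proof (cases "X = And \<phi> \<psi>")
      case True
      then show ?thesis using AndL principal principal_left.AndL by simp
    next
      case False
      with AndL.prems obtain K where K: "\<Gamma> = add_mset X K" "T = add_mset (And \<phi> \<psi>) K"
        by (auto elim: add_mset_eq_add_mset_neqE)
      have "G4iSLt (add_mset \<phi> (add_mset \<psi> (K + N))) \<chi>"
        using AndL.IH[of "add_mset \<phi> (add_mset \<psi> K)"] K by (simp add: add_mset_commute)
      then show ?thesis by (rule G4iSLt_ctx_eq[OF G4iSLt.AndL]) (simp add: K)
    qed
  next
    case (OrL \<phi> \<Gamma> \<chi> \<psi>)
    show ?case
    proof (cases "X = Or \<phi> \<psi>")
      case True
      then show ?thesis using OrL principal principal_left.OrL by simp
    next
      case False
      with OrL.prems obtain K where K: "\<Gamma> = add_mset X K" "T = add_mset (Or \<phi> \<psi>) K"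
        by (auto elim: add_mset_eq_add_mset_neqE)
      have "G4iSLt (add_mset \<phi> (K + N)) \<chi>" "G4iSLt (add_mset \<psi> (K + N)) \<chi>"
        using OrL.IH(1)[of "add_mset \<phi> K"] OrL.IH(2)[of "add_mset \<psi> K"] K
        by (simp_all add: add_mset_commute)
      then show ?thesis by (rule G4iSLt_ctx_eq[OF G4iSLt.OrL]) (simp add: K)
    qed
  next
    case (PImpL p \<phi> \<Gamma> \<chi>)
    from PImpL.prems \<open>X \<noteq> Var p\<close> obtain T' where T':
      "add_mset (Imp (Var p) \<phi>) \<Gamma> = add_mset X T'" "T = add_mset (Var p) T'"
      by (auto elim: add_mset_eq_add_mset_neqE)
    show ?case
    proof (cases "X = Imp (Var p) \<phi>")
      case True
      then have "\<Gamma> = T'" using T'(1) by simp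
      then have "principal_left X T \<chi>" using PImpL.hyps T' True by (simp add: principal_left.PImpL)
      then show ?thesis by (rule principal)
    next
      case False
      with T'(1) obtain K where K: "\<Gamma> = add_mset X K" "T' = add_mset (Imp (Var p) \<phi>) K"
        by (auto elim: add_mset_eq_add_mset_neqE)
      have "G4iSLt (add_mset (Var p) (add_mset \<phi> (K + N))) \<chi>"
        using PImpL.IH[of "add_mset (Var p) (add_mset \<phi> K)"] K by (simp add: add_mset_commute)
      then show ?thesis by (rule G4iSLt_ctx_eq[OF G4iSLt.PImpL]) (simp add: K T')
    qed
  next
    case (ImpR \<phi> \<Gamma> \<psi>)
    have "G4iSLt (add_mset \<phi> (T + N)) \<psi>"
      using ImpR.IH[of "add_mset \<phi> T"] ImpR.prems by (simp add: add_mset_commute)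
    then show ?case by (rule G4iSLt.ImpR)
  next
    case (BoxImpL \<Phi> \<Gamma> \<psi> \<phi> \<chi>)
    from BoxImpL.prems show ?case
    proof (cases rule: add_mset_eq_boxed_context_cases)
      case (unboxed \<Phi>')
      have "G4iSLt ((\<Phi>' + N) + boxms \<Gamma> + {#Imp (Box \<phi>) \<psi>#}) \<chi>"
        using BoxImpL.IH(1)[of "\<Phi>' + \<Gamma> + {#\<psi>, Box \<phi>#}"]
          BoxImpL.IH(2)[of "\<Phi>' + boxms \<Gamma> + {#\<psi>#}"] unboxed
        by (intro BoxImpL_gen) (simp_all add: ac_simps)
      then show ?thesis using unboxed by (simp add: ac_simps)
    next
      case (rest R')
      then show ?thesis using BoxImpL.hyps principal principal_left.BoxImpL by simp
    qed (use \<open>\<not> is_boxed X\<close> in \<open>simp add: is_boxed_def\<close>)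
  next
    case (SLtR \<Phi> \<Gamma> \<phi>)
    from SLtR.prems obtain \<Phi>' where \<Phi>': "\<Phi> = add_mset X \<Phi>'" "T = \<Phi>' + boxms \<Gamma>"
      by (rule add_mset_eq_boxed_context_cases[where R = "{#}", simplified])
        (use \<open>\<not> is_boxed X\<close> in \<open>simp_all add: is_boxed_def\<close>)
    have "G4iSLt ((\<Phi>' + N) + boxms \<Gamma>) (Box \<phi>)"
      using SLtR.IH[of "\<Phi>' + \<Gamma> + {#Box \<phi>#}"] \<Phi>' by (intro SLtR_gen) (simp add: ac_simps)
    then show ?case using \<Phi>' by (simp add: ac_simps)
  next
    case (AndImpL \<phi> \<psi> \<chi> \<Gamma> \<delta>)
    show ?case
    proof (cases "X = Imp (And \<phi> \<psi>) \<chi>")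
      case True
      then show ?thesis using AndImpL principal principal_left.AndImpL by simp
    next
      case False
      with AndImpL.prems obtain K where K: "\<Gamma> = add_mset X K" "T = add_mset (Imp (And \<phi> \<psi>) \<chi>) K"
        by (auto elim: add_mset_eq_add_mset_neqE)
      have "G4iSLt (add_mset (Imp \<phi> (Imp \<psi> \<chi>)) (K + N)) \<delta>"
        using AndImpL.IH[of "add_mset (Imp \<phi> (Imp \<psi> \<chi>)) K"] K by (simp add: add_mset_commute)
      then show ?thesis by (rule G4iSLt_ctx_eq[OF G4iSLt.AndImpL]) (simp add: K)
    qed
  next
    case (OrImpL \<phi> \<chi> \<psi> \<Gamma> \<delta>)
    show ?case
    proof (cases "X = Imp (Or \<phi> \<psi>) \<chi>")
      case True
      then show ?thesis using OrImpL principal principal_left.OrImpL by simp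
    next
      case False
      with OrImpL.prems obtain K where K: "\<Gamma> = add_mset X K" "T = add_mset (Imp (Or \<phi> \<psi>) \<chi>) K"
        by (auto elim: add_mset_eq_add_mset_neqE)
      have "G4iSLt (add_mset (Imp \<phi> \<chi>) (add_mset (Imp \<psi> \<chi>) (K + N))) \<delta>"
        using OrImpL.IH[of "add_mset (Imp \<phi> \<chi>) (add_mset (Imp \<psi> \<chi>) K)"] K
        by (simp add: add_mset_commute)
      then show ?thesis by (rule G4iSLt_ctx_eq[OF G4iSLt.OrImpL]) (simp add: K)
    qed
  next
    case (ImpImpL \<psi> \<chi> \<Gamma> \<phi> \<delta>)
    show ?case
    proof (cases "X = Imp (Imp \<phi> \<psi>) \<chi>")
      case True
      then show ?thesis using ImpImpL principal principal_left.ImpImpL by simp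
    next
      case False
      with ImpImpL.prems obtain K where K: "\<Gamma> = add_mset X K" "T = add_mset (Imp (Imp \<phi> \<psi>) \<chi>) K"
        by (auto elim: add_mset_eq_add_mset_neqE)
      have "G4iSLt (add_mset (Imp \<psi> \<chi>) (K + N)) (Imp \<phi> \<psi>)" "G4iSLt (add_mset \<chi> (K + N)) \<delta>"
        using ImpImpL.IH(1)[of "add_mset (Imp \<psi> \<chi>) K"] ImpImpL.IH(2)[of "add_mset \<chi> K"] K
        by (simp_all add: add_mset_commute)
      then show ?thesis by (rule G4iSLt_ctx_eq[OF G4iSLt.ImpImpL]) (simp add: K)
    qed
  qed (simp_all add: G4iSLt.AndR G4iSLt.OrR1 G4iSLt.OrR2)
  then show ?thesis using assms(1) by blast
qed

lemma AndL_inv: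
  assumes "G4iSLt (add_mset (And a b) T) c"
  shows "G4iSLt (add_mset a (add_mset b T)) c"
  using left_replacement[OF assms, of "{#a, b#}"]
  by (auto simp: is_boxed_def add_mset_commute elim: principal_left.cases)

lemma OrL_inv1:
  assumes "G4iSLt (add_mset (Or a b) T) c"
  shows "G4iSLt (add_mset a T) c"
  using left_replacement[OF assms, of "{#a#}"]
  by (auto simp: is_boxed_def elim: principal_left.cases)

lemma OrL_inv2:
  assumes "G4iSLt (add_mset (Or a b) T) c"
  shows "G4iSLt (add_mset b T) c"
  using left_replacement[OF assms, of "{#b#}"]
  by (auto simp: is_boxed_def elim: principal_left.cases)

lemma AndImpL_inv:
  assumes "G4iSLt (add_mset (Imp (And a b) d) T) c"
  shows "G4iSLt (add_mset (Imp a (Imp b d)) T) c"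
  using left_replacement[OF assms, of "{#Imp a (Imp b d)#}"]
  by (auto simp: is_boxed_def elim: principal_left.cases)

lemma OrImpL_inv:
  assumes "G4iSLt (add_mset (Imp (Or a b) d) T) c"
  shows "G4iSLt (add_mset (Imp a d) (add_mset (Imp b d) T)) c"
  using left_replacement[OF assms, of "{#Imp a d, Imp b d#}"]
  by (auto simp: is_boxed_def add_mset_commute elim: principal_left.cases)

lemma ImpL_inv_consequent:
  assumes "G4iSLt (add_mset (Imp a d) T) c" "\<And>x y. a \<noteq> And x y" "\<And>x y. a \<noteq> Or x y"
  shows "G4iSLt (add_mset d T) c"
  using assms(1)
proof (rule left_replacement[where N = "{#d#}", simplified])
  fix T c
  assume "principal_left (Imp a d) T c"
  then show "G4iSLt (add_mset d T) c"
    by cases (use assms(2,3) in \<open>auto simp: add_mset_commute\<close>)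
qed (auto simp: is_boxed_def)

lemma ImpR_inv:
  assumes "G4iSLt \<Gamma> (Imp a b)"
  shows "G4iSLt (add_mset a \<Gamma>) b"
  using assms
proof (induction \<Gamma> "Imp a b" arbitrary: a b rule: G4iSLt.induct)
  case (BotL \<Gamma>)
  then show ?case by (metis G4iSLt.BotL add_mset_commute)
next
  case (AndL \<phi> \<psi> \<Gamma>)
  have "G4iSLt (add_mset \<phi> (add_mset \<psi> (add_mset a \<Gamma>))) b"
    using AndL by (simp add: add_mset_commute)
  then show ?case by (rule G4iSLt_ctx_eq[OF G4iSLt.AndL]) (simp add: add_mset_commute)
next
  case (OrL \<phi> \<Gamma> \<psi>)
  have "G4iSLt (add_mset \<phi> (add_mset a \<Gamma>)) b" "G4iSLt (add_mset \<psi> (add_mset a \<Gamma>)) b"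
    using OrL by (simp_all add: add_mset_commute)
  then show ?case by (rule G4iSLt_ctx_eq[OF G4iSLt.OrL]) (simp add: add_mset_commute)
next
  case (PImpL p \<phi> \<Gamma>)
  have "G4iSLt (add_mset (Var p) (add_mset \<phi> (add_mset a \<Gamma>))) b"
    using PImpL by (simp add: add_mset_commute)
  then show ?case by (rule G4iSLt_ctx_eq[OF G4iSLt.PImpL]) (simp add: add_mset_commute)
next
  case (BoxImpL \<Phi> \<Gamma> \<psi> \<phi>)
  have "G4iSLt (add_mset a (\<Phi> + boxms \<Gamma> + {#\<psi>#})) b"
    using BoxImpL by simp
  then have "G4iSLt (add_mset a \<Phi> + boxms \<Gamma> + {#Imp (Box \<phi>) \<psi>#}) b"
    using weakening[OF BoxImpL.hyps(2), of a]
    by (intro BoxImpL_gen) (simp_all add: add_mset_commute)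
  then show ?case by (simp add: add_mset_commute)
next
  case (AndImpL \<phi> \<psi> \<chi> \<Gamma>)
  have "G4iSLt (add_mset (Imp \<phi> (Imp \<psi> \<chi>)) (add_mset a \<Gamma>)) b"
    using AndImpL by (simp add: add_mset_commute)
  then show ?case by (rule G4iSLt_ctx_eq[OF G4iSLt.AndImpL]) (simp add: add_mset_commute)
next
  case (OrImpL \<phi> \<chi> \<psi> \<Gamma>)
  have "G4iSLt (add_mset (Imp \<phi> \<chi>) (add_mset (Imp \<psi> \<chi>) (add_mset a \<Gamma>))) b"
    using OrImpL by (simp add: add_mset_commute)
  then show ?case by (rule G4iSLt_ctx_eq[OF G4iSLt.OrImpL]) (simp add: add_mset_commute)
next
  case (ImpImpL \<psi> \<chi> \<Gamma> \<phi>)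
  have "G4iSLt (add_mset (Imp \<psi> \<chi>) (add_mset a \<Gamma>)) (Imp \<phi> \<psi>)"
    using weakening[OF ImpImpL.hyps(1), of a] by (simp add: add_mset_commute)
  moreover have "G4iSLt (add_mset \<chi> (add_mset a \<Gamma>)) b"
    using ImpImpL by (simp add: add_mset_commute)
  ultimately show ?case by (rule G4iSLt_ctx_eq[OF G4iSLt.ImpImpL]) (simp add: add_mset_commute)
qed simp

text \<open>By induction on the derivation of \<open>\<Gamma> \<Rightarrow> a\<close>: its last rule dictates the left rule that
  introduces \<open>a \<rightarrow> d\<close> (\<open>\<and>R\<close> gives \<open>\<and>\<rightarrow>L\<close>, \<open>\<rightarrow>R\<close> gives \<open>\<rightarrow>\<rightarrow>L\<close>, a left rule permutes
  below), and the invertible left rules carry \<open>d, \<Gamma> \<Rightarrow> e\<close> into the premises.\<close>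

lemma ImpL_admissible:
  assumes "G4iSLt \<Gamma> a" "G4iSLt (add_mset d \<Gamma>) e"
  shows "G4iSLt (add_mset (Imp a d) \<Gamma>) e"
  using assms
proof (induction arbitrary: d e rule: G4iSLt.induct)
  case (BotL \<Gamma> \<chi>)
  then show ?case by (metis G4iSLt.BotL add_mset_commute)
next
  case (IdP p \<Gamma>)
  have "G4iSLt (add_mset (Var p) (add_mset d \<Gamma>)) e" using IdP by (simp add: add_mset_commute)
  then show ?case by (rule G4iSLt_ctx_eq[OF G4iSLt.PImpL]) (simp add: add_mset_commute)
next
  case (AndL \<phi> \<psi> \<Gamma> \<chi>)
  have "G4iSLt (add_mset (And \<phi> \<psi>) (add_mset d \<Gamma>)) e"
    using AndL.prems by (simp add: add_mset_commute)
  from AndL_inv[OF this] have "G4iSLt (add_mset d (add_mset \<phi> (add_mset \<psi> \<Gamma>))) e"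
    by (simp add: add_mset_commute)
  then have "G4iSLt (add_mset \<phi> (add_mset \<psi> (add_mset (Imp \<chi> d) \<Gamma>))) e"
    using AndL.IH by (simp add: add_mset_commute)
  then show ?case by (rule G4iSLt_ctx_eq[OF G4iSLt.AndL]) (simp add: add_mset_commute)
next
  case (AndR \<Gamma> \<phi> \<psi>)
  have "G4iSLt (add_mset (Imp \<psi> d) \<Gamma>) e" using AndR.IH(2)[OF AndR.prems] .
  then show ?case by (rule G4iSLt.AndImpL[OF AndR.IH(1)])
next
  case (OrL \<phi> \<Gamma> \<chi> \<psi>)
  have disj: "G4iSLt (add_mset (Or \<phi> \<psi>) (add_mset d \<Gamma>)) e"
    using OrL.prems by (simp add: add_mset_commute)
  have "G4iSLt (add_mset d (add_mset \<phi> \<Gamma>)) e" "G4iSLt (add_mset d (add_mset \<psi> \<Gamma>)) e"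
    using OrL_inv1[OF disj] OrL_inv2[OF disj] by (simp_all add: add_mset_commute)
  then have "G4iSLt (add_mset \<phi> (add_mset (Imp \<chi> d) \<Gamma>)) e"
    "G4iSLt (add_mset \<psi> (add_mset (Imp \<chi> d) \<Gamma>)) e"
    using OrL.IH by (simp_all add: add_mset_commute)
  then show ?case by (rule G4iSLt_ctx_eq[OF G4iSLt.OrL]) (simp add: add_mset_commute)
next
  case (OrR1 \<Gamma> \<phi> \<psi>)
  have "G4iSLt (add_mset (Imp \<psi> d) (add_mset (Imp \<phi> d) \<Gamma>)) e"
    using weakening[OF OrR1.IH[OF OrR1.prems]] .
  then show ?case by (intro G4iSLt.OrImpL) (simp add: add_mset_commute)
next
  case (OrR2 \<Gamma> \<psi> \<phi>)
  have "G4iSLt (add_mset (Imp \<phi> d) (add_mset (Imp \<psi> d) \<Gamma>)) e"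
    using weakening[OF OrR2.IH[OF OrR2.prems]] .
  then show ?case by (rule G4iSLt.OrImpL)
next
  case (PImpL p \<phi> \<Gamma> \<chi>)
  have implication: "G4iSLt (add_mset (Imp (Var p) \<phi>) (add_mset d (add_mset (Var p) \<Gamma>))) e"
    using PImpL.prems by (simp add: add_mset_commute)
  have "G4iSLt (add_mset d (add_mset (Var p) (add_mset \<phi> \<Gamma>))) e"
    by (rule G4iSLt_ctx_eq[OF ImpL_inv_consequent[OF implication]]) (simp_all add: add_mset_commute)
  then have "G4iSLt (add_mset (Var p) (add_mset \<phi> (add_mset (Imp \<chi> d) \<Gamma>))) e"
    using PImpL.IH by (simp add: add_mset_commute)
  then show ?case by (rule G4iSLt_ctx_eq[OF G4iSLt.PImpL]) (simp add: add_mset_commute)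
next
  case (ImpR \<phi> \<Gamma> \<psi>)
  have "G4iSLt (add_mset \<phi> (add_mset (Imp \<psi> d) \<Gamma>)) \<psi>"
    using weakening[OF ImpR.hyps, of "Imp \<psi> d"] by (simp add: add_mset_commute)
  then show ?case using ImpR.prems by (intro G4iSLt.ImpImpL G4iSLt.ImpR)
next
  case (BoxImpL \<Phi> \<Gamma> \<psi> \<phi> \<chi>)
  have implication: "G4iSLt (add_mset (Imp (Box \<phi>) \<psi>) (add_mset d (\<Phi> + boxms \<Gamma>))) e"
    using BoxImpL.prems by (simp add: add_mset_commute)
  have "G4iSLt (add_mset d (\<Phi> + boxms \<Gamma> + {#\<psi>#})) e"
    by (rule G4iSLt_ctx_eq[OF ImpL_inv_consequent[OF implication]]) (simp_all add: add_mset_commute)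
  then have "G4iSLt (add_mset (Imp \<chi> d) \<Phi> + boxms \<Gamma> + {#\<psi>#}) e"
    using BoxImpL.IH(2) by (simp add: add_mset_commute)
  then have "G4iSLt (add_mset (Imp \<chi> d) \<Phi> + boxms \<Gamma> + {#Imp (Box \<phi>) \<psi>#}) e"
    using weakening[OF BoxImpL.hyps(2), of "Imp \<chi> d"]
    by (intro BoxImpL_gen) (simp_all add: add_mset_commute)
  then show ?case by (simp add: add_mset_commute)
next
  case (SLtR \<Phi> \<Gamma> \<phi>)
  have "G4iSLt (\<Phi> + boxms \<Gamma> + {#Imp (Box \<phi>) d#}) e"
    using weakening[OF SLtR.hyps(2), of d] SLtR.prems
    by (intro BoxImpL_gen) (simp_all add: add_mset_commute)
  then show ?case by simp
next
  case (AndImpL \<phi> \<psi> \<chi> \<Gamma> \<delta>)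
  have "G4iSLt (add_mset (Imp (And \<phi> \<psi>) \<chi>) (add_mset d \<Gamma>)) e"
    using AndImpL.prems by (simp add: add_mset_commute)
  from AndImpL_inv[OF this] have "G4iSLt (add_mset d (add_mset (Imp \<phi> (Imp \<psi> \<chi>)) \<Gamma>)) e"
    by (simp add: add_mset_commute)
  then have "G4iSLt (add_mset (Imp \<phi> (Imp \<psi> \<chi>)) (add_mset (Imp \<delta> d) \<Gamma>)) e"
    using AndImpL.IH by (simp add: add_mset_commute)
  then show ?case by (rule G4iSLt_ctx_eq[OF G4iSLt.AndImpL]) (simp add: add_mset_commute)
next
  case (OrImpL \<phi> \<chi> \<psi> \<Gamma> \<delta>)
  have "G4iSLt (add_mset (Imp (Or \<phi> \<psi>) \<chi>) (add_mset d \<Gamma>)) e"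
    using OrImpL.prems by (simp add: add_mset_commute)
  from OrImpL_inv[OF this] have "G4iSLt (add_mset d (add_mset (Imp \<phi> \<chi>) (add_mset (Imp \<psi> \<chi>) \<Gamma>))) e"
    by (simp add: add_mset_commute)
  then have "G4iSLt (add_mset (Imp \<phi> \<chi>) (add_mset (Imp \<psi> \<chi>) (add_mset (Imp \<delta> d) \<Gamma>))) e"
    using OrImpL.IH by (simp add: add_mset_commute)
  then show ?case by (rule G4iSLt_ctx_eq[OF G4iSLt.OrImpL]) (simp add: add_mset_commute)
next
  case (ImpImpL \<psi> \<chi> \<Gamma> \<phi> \<delta>)
  have implication: "G4iSLt (add_mset (Imp (Imp \<phi> \<psi>) \<chi>) (add_mset d \<Gamma>)) e"
    using ImpImpL.prems by (simp add: add_mset_commute)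
  have "G4iSLt (add_mset d (add_mset \<chi> \<Gamma>)) e"
    by (rule G4iSLt_ctx_eq[OF ImpL_inv_consequent[OF implication]]) (simp_all add: add_mset_commute)
  then have "G4iSLt (add_mset \<chi> (add_mset (Imp \<delta> d) \<Gamma>)) e"
    using ImpImpL.IH(2) by (simp add: add_mset_commute)
  moreover have "G4iSLt (add_mset (Imp \<psi> \<chi>) (add_mset (Imp \<delta> d) \<Gamma>)) (Imp \<phi> \<psi>)"
    using weakening[OF ImpImpL.hyps(1), of "Imp \<delta> d"] by (simp add: add_mset_commute)
  ultimately show ?case by (rule G4iSLt_ctx_eq[OF G4iSLt.ImpImpL[rotated]]) (simp add: add_mset_commute)
qed

theorem mainTheorem12:
  fixes \<Gamma> :: "form multiset" and \<phi> \<psi> \<delta> \<chi> :: form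
  assumes "G4iSLt (add_mset (Imp (Imp \<phi> \<psi>) \<delta>) \<Gamma>) \<chi>"
  shows "G4iSLt (\<Gamma> + {#\<phi>, Imp \<psi> \<delta>, Imp \<psi> \<delta>#}) \<chi>"
  using assms
proof (rule left_replacement)
  fix T c
  assume "principal_left (Imp (Imp \<phi> \<psi>) \<delta>) T c"
  then have left: "G4iSLt (add_mset (Imp \<psi> \<delta>) T) (Imp \<phi> \<psi>)" and right: "G4iSLt (add_mset \<delta> T) c"
    by (cases; simp)+
  have "G4iSLt (add_mset \<phi> (add_mset (Imp \<psi> \<delta>) T)) \<psi>"
    using ImpR_inv[OF left] .
  moreover have "G4iSLt (add_mset \<delta> (add_mset \<phi> (add_mset (Imp \<psi> \<delta>) T))) c"
    using weakening[OF weakening[OF right, of \<phi>], of "Imp \<psi> \<delta>"] by (simp add: add_mset_commute)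
  ultimately have "G4iSLt (add_mset (Imp \<psi> \<delta>) (add_mset \<phi> (add_mset (Imp \<psi> \<delta>) T))) c"
    by (rule ImpL_admissible)
  then show "G4iSLt (T + {#\<phi>, Imp \<psi> \<delta>, Imp \<psi> \<delta>#}) c"
    by (simp add: add_mset_commute)
qed (auto simp: is_boxed_def)

end
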